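(* (Soundness.) For every formula $\phi$ of the language $\Phi$: if $\vdash\phi$, then $h\Vdash\phi$ for every history $h$ of every regular epistemic transition system.
   Context: Fix a set of agents $\mathcal{A}$. A coalition is a subset of $\mathcal{A}$. The language $\Phi$ is given by $\phi ::= p \mid \neg\phi \mid \phi\to\phi \mid \mathsf{K}_C\phi \mid \mathsf{H}_C\phi$, where $p$ ranges over propositional variables and $C\subseteq\mathcal{A}$; $\bot,\top$ are defined as usual. Axioms: all propositional tautologies of $\Phi$ and (1) Truth: $\mathsf{K}_C\phi\to\phi$; (2) Negative Introspection: $\neg\mathsf{K}_C\phi\to\mathsf{K}_C\neg\mathsf{K}_C\phi$; (3) Distributivity: $\mathsf{K}_C(\phi\to\psi)\to(\mathsf{K}_C\phi\to\mathsf{K}_C\psi)$; (4) Monotonicity: $\mathsf{K}_C\phi\to\mathsf{K}_D\phi$ if $C\subseteq D$; (5) Strategic Positive Introspection: $\mathsf{H}_C\phi\to\mathsf{K}_C\mathsf{H}_C\phi$; (6) Cooperation: $\mathsf{H}_C(\phi\to\psi)\to(\mathsf{H}_D\phi\to\mathsf{H}_{C\cup D}\psi)$ where $C\cap D=\varnothing$; (7) Empty Coalition: $\mathsf{K}_\varnothing\phi\to\mathsf{H}_\varnothing\phi$; (8) Perfect Recall: $\mathsf{H}_D\phi\to\mathsf{H}_D\mathsf{K}_C\phi$ where $D\subseteq C\neq\varnothing$; (9) Unachievability of Falsehood: $\neg\mathsf{H}_C\bot$. $\vdash\phi$ means $\phi$ is derivable from the axioms using Necessitation ($\phi/\mathsf{K}_C\phi$),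 Strategic Necessitation ($\phi/\mathsf{H}_C\phi$) and Modus Ponens. An epistemic transition system is a tuple $(W,\{\sim_a\}_{a\in\mathcal{A}},V,M,\pi)$ with $W$ a set of states, each $\sim_a$ an equivalence relation on $W$, $V$ a nonempty set (domain of choices), $M\subseteq W\times V^{\mathcal{A}}\times W$, and $\pi$ mapping propositional variables to subsets of $W$. It is regular if for every $w\in W$ and $\mathbf{s}\in V^{\mathcal{A}}$ there is $w'$ with $(w,\mathbf{s},w')\in M$. A strategy profile of coalition $C$ is an element of $V^C$; for profiles $\mathbf{s}_1\in V^{C_1},\mathbf{s}_2\in V^{C_2}$ and $C\subseteq C_1\cap C_2$, $\mathbf{s}_1=_C\mathbf{s}_2$ means $(\mathbf{s}_1)_a=(\mathbf{s}_2)_a$ for all $a\in C$. $w\sim_C w'$ means $w\sim_a w'$ for all $a\in C$. A history is a sequence $(w_0,\mathbf{s}_1,w_1,\dots,\mathbf{s}_n,w_n)$, $n\ge0$, with $w_i\in W$, $\mathbf{s}_i\in V^{\mathcal{A}}$, $(w_i,\mathbf{s}_{i+1},w_{i+1})\in M$ for $i<n$; $hd(h)$ is its last element and $h::\mathbf{s}::w$ denotes extension by $\mathbf{s},w$. For histories $h=(w_0,\mathbf{s}_1,\dots,w_n)$, $h'=(w'_0,\mathbf{s}'_1,\dots,w'_m)$ and agent $a$, $h\approx_a h'$ iff $n=m$, $w_i\sim_a w'_i$ for all $i$, and $(\mathbf{s}_i)_a=(\mathbf{s}'_i)_a$ for all $i$; $h\approx_C h'$ iff $h\approx_a h'$ for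 all $a\in C$ (so $\approx_\varnothing$ relates any two histories). Satisfaction: $h\Vdash p$ iff $hd(h)\in\pi(p)$; Boolean clauses as usual; $h\Vdash\mathsf{K}_C\phi$ iff $h'\Vdash\phi$ for every history $h'$ with $h\approx_C h'$; $h\Vdash\mathsf{H}_C\phi$ iff there is $\mathbf{s}\in V^C$ such that for every history $h'::\mathbf{s}'::w'$ with $h\approx_C h'$ and $\mathbf{s}=_C\mathbf{s}'$ we have $h'::\mathbf{s}'::w'\Vdash\phi$. *)

theory Defs
  imports Main
begin

datatype ('a, 'p) fm =
    Prop 'p
  | Neg "('a, 'p) fm"
  | Imp "('a, 'p) fm" "('a, 'p) fm"
  | K "'a set" "('a, 'p) fm"
  | H "'a set" "('a, 'p) fm"

definition Top :: "('a, 'p) fm" where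
  "Top = Imp (Prop undefined) (Prop undefined)"

definition Bot :: "('a, 'p) fm" where
  "Bot = Neg Top"

fun pval :: "(('a, 'p) fm \<Rightarrow> bool) \<Rightarrow> ('a, 'p) fm \<Rightarrow> bool" where
  "pval v (Prop p) = v (Prop p)"
| "pval v (Neg f) = (\<not> pval v f)"
| "pval v (Imp f g) = (pval v f \<longrightarrow> pval v g)"
| "pval v (K C f) = v (K C f)"
| "pval v (H C f) = v (H C f)"

definition tautology :: "('a, 'p) fm \<Rightarrow> bool" where
  "tautology f \<longleftrightarrow> (\<forall>v. pval v f)"

inductive derivable :: "('a, 'p) fm \<Rightarrow> bool" where
  Taut: "tautology f \<Longrightarrow> derivable f"
| Truth: "derivable (Imp (K C f) f)"
| NegIntro: "derivable (Imp (Neg (K C f)) (K C (Neg (K C f))))"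
| Distr: "derivable (Imp (K C (Imp f g)) (Imp (K C f) (K C g)))"
| Mono: "C \<subseteq> D \<Longrightarrow> derivable (Imp (K C f) (K D f))"
| SPI: "derivable (Imp (H C f) (K C (H C f)))"
| Coop: "C \<inter> D = {} \<Longrightarrow> derivable (Imp (H C (Imp f g)) (Imp (H D f) (H (C \<union> D) g)))"
| Empty: "derivable (Imp (K {} f) (H {} f))"
| Recall: "D \<subseteq> C \<Longrightarrow> C \<noteq> {} \<Longrightarrow> derivable (Imp (H D f) (H D (K C f)))"
| Unach: "derivable (Neg (H C Bot))"
| NecK: "derivable f \<Longrightarrow> derivable (K C f)"
| NecH: "derivable f \<Longrightarrow> derivable (H C f)"
| MP: "derivable (Imp f g) \<Longrightarrow> derivable f \<Longrightarrow> derivable g"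

text \<open>An epistemic transition system with agents of type 'a, states W = UNIV :: 'w,
  choice domain V = UNIV :: 'v (nonempty as every type), indistinguishability
  relations sim a, mechanism M and valuation pi. Complete strategy profiles are
  functions 'a => 'v; profiles of a coalition C are also represented by such
  functions, of which only the values on C are ever used.\<close>

record ('a, 'w, 'v, 'p) ets =
  sim :: "'a \<Rightarrow> 'w \<Rightarrow> 'w \<Rightarrow> bool"
  mech :: "'w \<Rightarrow> ('a \<Rightarrow> 'v) \<Rightarrow> 'w \<Rightarrow> bool"
  val :: "'p \<Rightarrow> 'w set"

definition is_ets :: "('a, 'w, 'v, 'p) ets \<Rightarrow> bool" where
  "is_ets E \<longleftrightarrow> (\<forall>a. equivp (sim E a))"

definition regular :: "('a, 'w, 'v, 'p) ets \<Rightarrow> bool" where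
  "regular E \<longleftrightarrow> (\<forall>w s. \<exists>w'. mech E w s w')"

text \<open>A history (w0, s1, w1, ..., sn, wn) is represented as (w0, [(s1,w1),...,(sn,wn)]).\<close>

type_synonym ('a, 'w, 'v) hist = "'w \<times> (('a \<Rightarrow> 'v) \<times> 'w) list"

fun steps_ok :: "('a, 'w, 'v, 'p) ets \<Rightarrow> 'w \<Rightarrow> (('a \<Rightarrow> 'v) \<times> 'w) list \<Rightarrow> bool" where
  "steps_ok E w [] = True"
| "steps_ok E w ((s, w') # xs) = (mech E w s w' \<and> steps_ok E w' xs)"

definition is_history :: "('a, 'w, 'v, 'p) ets \<Rightarrow> ('a, 'w, 'v) hist \<Rightarrow> bool" where
  "is_history E h \<longleftrightarrow> steps_ok E (fst h) (snd h)"

definition hd_state :: "('a, 'w, 'v) hist \<Rightarrow> 'w" where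
  "hd_state h = (if snd h = [] then fst h else snd (last (snd h)))"

definition ext :: "('a, 'w, 'v) hist \<Rightarrow> ('a \<Rightarrow> 'v) \<Rightarrow> 'w \<Rightarrow> ('a, 'w, 'v) hist" where
  "ext h s w = (fst h, snd h @ [(s, w)])"

definition states :: "('a, 'w, 'v) hist \<Rightarrow> 'w list" where
  "states h = fst h # map snd (snd h)"

definition hist_indist_a :: "('a, 'w, 'v, 'p) ets \<Rightarrow> 'a \<Rightarrow> ('a, 'w, 'v) hist \<Rightarrow> ('a, 'w, 'v) hist \<Rightarrow> bool" where
  "hist_indist_a E a h h' \<longleftrightarrow>
     length (snd h) = length (snd h') \<and>
     (\<forall>i \<le> length (snd h). sim E a (states h ! i) (states h' ! i)) \<and>
     (\<forall>i < length (snd h). fst (snd h ! i) a = fst (snd h' ! i) a)"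

definition hist_indist :: "('a, 'w, 'v, 'p) ets \<Rightarrow> 'a set \<Rightarrow> ('a, 'w, 'v) hist \<Rightarrow> ('a, 'w, 'v) hist \<Rightarrow> bool" where
  "hist_indist E C h h' \<longleftrightarrow> (\<forall>a\<in>C. hist_indist_a E a h h')"

definition eq_on :: "'a set \<Rightarrow> ('a \<Rightarrow> 'v) \<Rightarrow> ('a \<Rightarrow> 'v) \<Rightarrow> bool" where
  "eq_on C s s' \<longleftrightarrow> (\<forall>a\<in>C. s a = s' a)"

fun sat :: "('a, 'w, 'v, 'p) ets \<Rightarrow> ('a, 'w, 'v) hist \<Rightarrow> ('a, 'p) fm \<Rightarrow> bool" where
  "sat E h (Prop p) = (hd_state h \<in> val E p)"
| "sat E h (Neg f) = (\<not> sat E h f)"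
| "sat E h (Imp f g) = (sat E h f \<longrightarrow> sat E h g)"
| "sat E h (K C f) = (\<forall>h'. is_history E h' \<and> hist_indist E C h h' \<longrightarrow> sat E h' f)"
| "sat E h (H C f) = (\<exists>s. \<forall>h' s' w'. is_history E (ext h' s' w') \<and> hist_indist E C h h'
        \<and> eq_on C s s' \<longrightarrow> sat E (ext h' s' w') f)"

end

(* The relations on histories are equivalences, which gives truth
   and both introspection axioms (a strategy that works after h works after every history
   indistinguishable from h). Strategies of disjoint coalitions can be merged, giving
   cooperation. Perfect recall holds because indistinguishability of histories records each
   agent's own past actions, and unachievability of falsehood because regularity gives every
   profile an outcome. *)

theory Submission
  imports Defs
begin

lemma sat_pval: "sat E h f = pval (sat E h) f"
  by (induction f) auto

lemma sat_tautology: "tautology f \<Longrightarrow> sat E h f"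
  unfolding tautology_def by (simp add: sat_pval)

lemma not_sat_Bot: "\<not> sat E h Bot"
  by (simp add: Bot_def Top_def)

lemma steps_ok_snoc:
  "steps_ok E w (xs @ [(s, w')]) \<longleftrightarrow>
     steps_ok E w xs \<and> mech E (if xs = [] then w else snd (last xs)) s w'"
  by (induction xs arbitrary: w) auto

lemma is_history_ext:
  "is_history E (ext h s w) \<longleftrightarrow> is_history E h \<and> mech E (hd_state h) s w"
  unfolding is_history_def ext_def hd_state_def by (simp add: steps_ok_snoc)

lemma ext_cases:
  assumes "snd h \<noteq> []"
  obtains h0 s w where "h = ext h0 s w"
proof -
  obtain s w where "last (snd h) = (s, w)" by fastforce
  with assms have "h = ext (fst h, butlast (snd h)) s w"
    by (simp add: ext_def) (metis append_butlast_last_id prod.collapse)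
  then show thesis by (rule that)
qed

lemma states_ext: "states (ext h s w) = states h @ [w]"
  by (simp add: states_def ext_def)

lemma length_states: "length (states h) = Suc (length (snd h))"
  by (simp add: states_def)

lemma hist_indist_refl: "is_ets E \<Longrightarrow> hist_indist E C h h"
  unfolding is_ets_def hist_indist_def hist_indist_a_def by (auto dest: equivp_reflp)

lemma hist_indist_euclidean:
  assumes "is_ets E" "hist_indist E C h h'" "hist_indist E C h h''"
  shows "hist_indist E C h' h''"
proof -
  have eucl: "sim E a x y \<Longrightarrow> sim E a x z \<Longrightarrow> sim E a y z" for a x y z
    using assms(1) unfolding is_ets_def by (meson equivp_symp equivp_transp)
  have "hist_indist_a E a h' h''" if "hist_indist_a E a h h'" "hist_indist_a E a h h''" for a
    using that unfolding hist_indist_a_def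
  proof (elim conjE, intro conjI allI impI)
    fix i
    assume "length (snd h) = length (snd h')" "length (snd h) = length (snd h'')"
      and "\<forall>i \<le> length (snd h). sim E a (states h ! i) (states h' ! i)"
      and "\<forall>i \<le> length (snd h). sim E a (states h ! i) (states h'' ! i)"
      and "i \<le> length (snd h')"
    then show "sim E a (states h' ! i) (states h'' ! i)"
      using eucl by metis
  qed simp_all
  with assms(2,3) show ?thesis
    unfolding hist_indist_def by blast
qed

lemma hist_indist_trans:
  assumes "is_ets E" "hist_indist E C h h'" "hist_indist E C h' h''"
  shows "hist_indist E C h h''"
proof -
  have "hist_indist E C h' h"
    using hist_indist_euclidean[OF assms(1,2)] hist_indist_refl[OF assms(1)] .
  then show ?thesis
    using hist_indist_euclidean[OF assms(1)] assms(3) by blast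
qed

lemma hist_indist_mono: "hist_indist E D h h' \<Longrightarrow> C \<subseteq> D \<Longrightarrow> hist_indist E C h h'"
  unfolding hist_indist_def by auto

lemma hist_indist_empty: "hist_indist E {} h h'"
  by (simp add: hist_indist_def)

lemma hist_indist_length:
  "hist_indist E C h h' \<Longrightarrow> C \<noteq> {} \<Longrightarrow> length (snd h) = length (snd h')"
  unfolding hist_indist_def hist_indist_a_def by auto

lemma hist_indist_a_ext_iff:
  "hist_indist_a E a (ext h s w) (ext h' s' w') \<longleftrightarrow>
     hist_indist_a E a h h' \<and> sim E a w w' \<and> s a = s' a"
proof (cases "length (snd h) = length (snd h')")
  case True
  have "(\<forall>i \<le> Suc n. P i) \<longleftrightarrow> (\<forall>i \<le> n. P i) \<and> P (Suc n)"
     "(\<forall>i < Suc n. P i) \<longleftrightarrow> (\<forall>i < n. P i) \<and> P n" for n and P :: "nat \<Rightarrow> bool"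
    by (auto simp: le_Suc_eq less_Suc_eq)
  with True show ?thesis
    unfolding hist_indist_a_def states_ext
    by (auto simp add: ext_def nth_append length_states cong: conj_cong)
next
  case False
  then show ?thesis by (simp add: hist_indist_a_def ext_def)
qed

lemma hist_indist_ext_iff:
  "hist_indist E C (ext h s w) (ext h' s' w') \<longleftrightarrow>
     hist_indist E C h h' \<and> (\<forall>a\<in>C. sim E a w w') \<and> eq_on C s s'"
  unfolding hist_indist_def eq_on_def hist_indist_a_ext_iff by blast

lemma hist_indist_ext_cases:
  assumes "hist_indist E C (ext h s w) g" "C \<noteq> {}"
  obtains h0 s0 w0 where "g = ext h0 s0 w0" "hist_indist E C h h0" "eq_on C s s0"
proof -
  have "snd g \<noteq> []"
    using hist_indist_length[OF assms] by (auto simp: ext_def)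
  then obtain h0 s0 w0 where "g = ext h0 s0 w0" by (rule ext_cases)
  with assms(1) show thesis
    using that by (simp add: hist_indist_ext_iff)
qed

definition enforces ::
    "('a, 'w, 'v, 'p) ets \<Rightarrow> 'a set \<Rightarrow> ('a, 'w, 'v) hist \<Rightarrow> ('a \<Rightarrow> 'v) \<Rightarrow> ('a, 'p) fm \<Rightarrow> bool" where
  "enforces E C h s f \<longleftrightarrow>
     (\<forall>h' s' w'. is_history E (ext h' s' w') \<and> hist_indist E C h h' \<and> eq_on C s s'
        \<longrightarrow> sat E (ext h' s' w') f)"

lemma sat_H_iff: "sat E h (H C f) \<longleftrightarrow> (\<exists>s. enforces E C h s f)"
  by (simp only: sat.simps enforces_def)

lemma enforcesD:
  "enforces E C h s f \<Longrightarrow> is_history E (ext h' s' w') \<Longrightarrow> hist_indist E C h h' \<Longrightarrow> eq_on C s s'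
     \<Longrightarrow> sat E (ext h' s' w') f"
  unfolding enforces_def by blast

lemma sat_truth:
  "is_ets E \<Longrightarrow> is_history E h \<Longrightarrow> sat E h (Imp (K C f) f)"
  unfolding sat.simps using hist_indist_refl by blast

lemma sat_negative_introspection:
  "is_ets E \<Longrightarrow> sat E h (Imp (Neg (K C f)) (K C (Neg (K C f))))"
  using hist_indist_euclidean by fastforce

lemma sat_distributivity: "sat E h (Imp (K C (Imp f g)) (Imp (K C f) (K C g)))"
  by simp

lemma sat_monotonicity: "C \<subseteq> D \<Longrightarrow> sat E h (Imp (K C f) (K D f))"
  unfolding sat.simps using hist_indist_mono by blast

lemma enforces_indist:
  assumes "is_ets E" "enforces E C h s f" "hist_indist E C h g"
  shows "enforces E C g s f"
  unfolding enforces_def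
proof (intro allI impI, elim conjE)
  fix h' s' w'
  assume "is_history E (ext h' s' w')" "hist_indist E C g h'" "eq_on C s s'"
  moreover have "hist_indist E C h h'"
    using hist_indist_trans[OF assms(1,3) \<open>hist_indist E C g h'\<close>] .
  ultimately show "sat E (ext h' s' w') f"
    using enforcesD[OF assms(2)] by blast
qed

lemma sat_strategic_positive_introspection:
  "is_ets E \<Longrightarrow> sat E h (Imp (H C f) (K C (H C f)))"
  unfolding sat.simps(3,4) sat_H_iff using enforces_indist by blast

lemma enforces_union:
  assumes "C \<inter> D = {}" "enforces E C h s1 (Imp f g)" "enforces E D h s2 f"
  shows "enforces E (C \<union> D) h (\<lambda>a. if a \<in> C then s1 a else s2 a) g"
  unfolding enforces_def
proof (intro allI impI, elim conjE)
  fix h' s' w'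
  assume hist: "is_history E (ext h' s' w')" and indist: "hist_indist E (C \<union> D) h h'"
    and agree: "eq_on (C \<union> D) (\<lambda>a. if a \<in> C then s1 a else s2 a) s'"
  from agree assms(1) have "eq_on C s1 s'" "eq_on D s2 s'"
    unfolding eq_on_def by (metis Un_iff, metis Un_iff disjoint_iff)
  moreover from indist have "hist_indist E C h h'" "hist_indist E D h h'"
    by (simp_all add: hist_indist_mono)
  ultimately show "sat E (ext h' s' w') g"
    using enforcesD[OF assms(2) hist] enforcesD[OF assms(3) hist] by simp
qed

lemma sat_cooperation:
  "C \<inter> D = {} \<Longrightarrow> sat E h (Imp (H C (Imp f g)) (Imp (H D f) (H (C \<union> D) g)))"
  unfolding sat.simps(3) sat_H_iff using enforces_union by blast

lemma sat_empty_coalition: "sat E h (Imp (K {} f) (H {} f))"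
  unfolding sat.simps(3,4) sat_H_iff enforces_def using hist_indist_empty by blast

text \<open>Agents of C remember the earlier history and their own last action, so a history
  C-indistinguishable from an outcome of s is, as seen by D \<subseteq> C, again an outcome of s.\<close>

lemma enforces_K:
  assumes "is_ets E" "D \<subseteq> C" "C \<noteq> {}" "enforces E D h s f"
  shows "enforces E D h s (K C f)"
  unfolding enforces_def sat.simps
proof (intro allI impI, elim conjE)
  fix h' s' w' g
  assume hh': "hist_indist E D h h'" and ss': "eq_on D s s'"
    and g: "is_history E g" "hist_indist E C (ext h' s' w') g"
  obtain h0 s0 w0 where g0: "g = ext h0 s0 w0" and C: "hist_indist E C h' h0" "eq_on C s' s0"
    using g(2) assms(3) by (rule hist_indist_ext_cases)
  from C(1) assms(2) have "hist_indist E D h' h0" by (rule hist_indist_mono)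
  moreover from C(2) assms(2) have "eq_on D s' s0" by (auto simp: eq_on_def)
  ultimately have "hist_indist E D h h0" "eq_on D s s0"
    using hist_indist_trans[OF assms(1) hh'] ss' by (simp_all add: eq_on_def)
  with assms(4) g(1)[unfolded g0] show "sat E g f"
    unfolding g0 by (rule enforcesD)
qed

lemma sat_perfect_recall:
  "is_ets E \<Longrightarrow> D \<subseteq> C \<Longrightarrow> C \<noteq> {} \<Longrightarrow> sat E h (Imp (H D f) (H D (K C f)))"
  unfolding sat.simps(3) sat_H_iff using enforces_K by blast

lemma sat_unachievability:
  assumes "is_ets E" "regular E" "is_history E h"
  shows "sat E h (Neg (H C Bot))"
proof -
  have "\<not> enforces E C h s Bot" for s
  proof -
    obtain w where "mech E (hd_state h) s w"
      using assms(2) unfolding regular_def by blast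
    with assms(3) have "is_history E (ext h s w)"
      by (simp add: is_history_ext)
    moreover have "hist_indist E C h h" "eq_on C s s"
      using hist_indist_refl[OF assms(1)] by (simp_all add: eq_on_def)
    ultimately show ?thesis
      using not_sat_Bot unfolding enforces_def by blast
  qed
  then show ?thesis
    unfolding sat.simps(2) sat_H_iff by blast
qed

theorem theorem1:
  fixes f :: "('a, 'p) fm" and E :: "('a, 'w, 'v, 'p) ets" and h :: "('a, 'w, 'v) hist"
  assumes "derivable f"
    and "is_ets E" and "regular E"
    and "is_history E h"
  shows "sat E h f"
  using assms(1,4)
proof (induction f arbitrary: h rule: derivable.induct)
  case Taut from Taut(1) show ?case by (rule sat_tautology)
next
  case Truth from assms(2) Truth show ?case by (rule sat_truth)
next
  case NegIntro show ?case using assms(2) by (rule sat_negative_introspection)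
next
  case Distr show ?case by (rule sat_distributivity)
next
  case Mono from Mono(1) show ?case by (rule sat_monotonicity)
next
  case SPI show ?case using assms(2) by (rule sat_strategic_positive_introspection)
next
  case Coop from Coop(1) show ?case by (rule sat_cooperation)
next
  case Empty show ?case by (rule sat_empty_coalition)
next
  case Recall from assms(2) Recall(1,2) show ?case by (rule sat_perfect_recall)
next
  case Unach from assms(2,3) Unach show ?case by (rule sat_unachievability)
next
  case (NecK f C) then show ?case by simp
next
  case (NecH f C) then show ?case unfolding sat_H_iff enforces_def by blast
next
  case (MP f g) then show ?case by simp
qed

end
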